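(* For every integer $n\ge3$ with $n\not\equiv 2\pmod 4$ and every positive integer $s$, there exists a $(1,s,n)$-AONT.
   Context: Let $X$ be a finite alphabet with $|X|=v$ and $0\le t\le s$. A $(t,s,v)$-AONT is a bijection $\phi:X^s\to X^s$ such that for every $I\subseteq\{1,\dots,s\}$ with $|I|=t$ and every $J\subseteq\{1,\dots,s\}$ with $|J|=s-t$, the map $x\mapsto\big((x_i)_{i\in I},(\phi(x)_j)_{j\in J}\big)$ is a bijection $X^s\to X^t\times X^{s-t}$. *)

theory Defs
  imports "HOL-Library.FuncSet"
begin

text \<open>Words of length s over alphabet X, indexed by positions 0..s-1
  (the paper's positions 1..s shifted by one).\<close>
definition words :: "nat \<Rightarrow> 'a set \<Rightarrow> (nat \<Rightarrow> 'a) set" where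
  "words s X = PiE {..<s} (\<lambda>_. X)"

definition is_AONT :: "nat \<Rightarrow> nat \<Rightarrow> 'a set \<Rightarrow> ((nat \<Rightarrow> 'a) \<Rightarrow> (nat \<Rightarrow> 'a)) \<Rightarrow> bool" where
  "is_AONT t s X \<phi> \<longleftrightarrow>
     t \<le> s \<and>
     bij_betw \<phi> (words s X) (words s X) \<and>
     (\<forall>I J. I \<subseteq> {..<s} \<and> card I = t \<and> J \<subseteq> {..<s} \<and> card J = s - t \<longrightarrow>
        bij_betw (\<lambda>x. (restrict x I, restrict (\<phi> x) J)) (words s X)
                 (PiE I (\<lambda>_. X) \<times> PiE J (\<lambda>_. X)))"

end

theory Submission
  imports Defs "HOL-Algebra.Elementary_Groups"
begin

(* A (1,s)-AONT is the inverse of a bijection P of X^s such that every output coordinate of P,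
   as a function of any single input coordinate with the others fixed, is injective.
   Given orthogonal Latin squares Q, R on X, such a P is the cascade that reads the inputs one at a
   time: each new input is combined by Q into every output produced so far, and by R with the last
   output to create one new output. Orthogonality makes the cascade injective, the Latin property
   propagates the single-coordinate injectivity. Orthogonal Latin squares of every order
   n \<noteq> 2 (mod 4) come from orthomorphisms \<theta> of abelian groups, via Q(a,b) = a + b and
   R(a,b) = a + \<theta>(b): take b \<mapsto> 2b on Z_n for odd n, and
   (b1,b2) \<mapsto> (b1 + b2, \<lfloor>b2/2\<rfloor> + k b1) on Z_2 \<times> Z_2k for n = 4k. *)

definition latin_square :: "'a set \<Rightarrow> ('a \<Rightarrow> 'a \<Rightarrow> 'a) \<Rightarrow> bool" where
  "latin_square X Q \<longleftrightarrow>
     (\<forall>a\<in>X. \<forall>b\<in>X. Q a b \<in> X) \<and> (\<forall>a\<in>X. inj_on (Q a) X) \<and> (\<forall>b\<in>X. inj_on (\<lambda>a. Q a b) X)"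

definition orthogonal_latin_squares :: "'a set \<Rightarrow> ('a \<Rightarrow> 'a \<Rightarrow> 'a) \<Rightarrow> ('a \<Rightarrow> 'a \<Rightarrow> 'a) \<Rightarrow> bool" where
  "orthogonal_latin_squares X Q R \<longleftrightarrow>
     latin_square X Q \<and> latin_square X R \<and> inj_on (\<lambda>(a, b). (Q a b, R a b)) (X \<times> X)"

lemma latin_square_closed: "latin_square X Q \<Longrightarrow> a \<in> X \<Longrightarrow> b \<in> X \<Longrightarrow> Q a b \<in> X"
  unfolding latin_square_def by blast

lemma latin_square_cancel_left:
  "latin_square X Q \<Longrightarrow> Q a b = Q a c \<Longrightarrow> a \<in> X \<Longrightarrow> b \<in> X \<Longrightarrow> c \<in> X \<Longrightarrow> b = c"
  unfolding latin_square_def by (blast dest: inj_onD)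

lemma latin_square_cancel_right:
  "latin_square X Q \<Longrightarrow> Q b a = Q c a \<Longrightarrow> a \<in> X \<Longrightarrow> b \<in> X \<Longrightarrow> c \<in> X \<Longrightarrow> b = c"
  unfolding latin_square_def by (blast dest: inj_onD)

lemma orthogonal_latin_squares_cancel:
  assumes "orthogonal_latin_squares X Q R" "Q a b = Q c d" "R a b = R c d"
    and "a \<in> X" "b \<in> X" "c \<in> X" "d \<in> X"
  shows "a = c \<and> b = d"
  using assms inj_onD[of "\<lambda>(a, b). (Q a b, R a b)" "X \<times> X" "(a, b)" "(c, d)"]
  unfolding orthogonal_latin_squares_def by auto

lemma orthogonal_latin_squares_latin:
  assumes "orthogonal_latin_squares X Q R"
  shows "latin_square X Q" "latin_square X R"
  using assms unfolding orthogonal_latin_squares_def by auto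

lemma latin_square_transfer:
  assumes Q: "latin_square S Q" and g: "bij_betw g X S"
  shows "latin_square X (\<lambda>a b. the_inv_into X g (Q (g a) (g b)))"
proof -
  let ?h = "the_inv_into X g"
  have gX: "g a \<in> S" if "a \<in> X" for a using bij_betw_apply[OF g that] .
  have QS: "Q (g a) (g b) \<in> S" if "a \<in> X" "b \<in> X" for a b
    using latin_square_closed[OF Q gX gX] that .
  have h_eq: "u = v" if "?h u = ?h v" "u \<in> S" "v \<in> S" for u v
    using inj_onD[OF bij_betw_imp_inj_on[OF bij_betw_the_inv_into[OF g]] that] .
  have g_eq: "a = b" if "g a = g b" "a \<in> X" "b \<in> X" for a b
    using inj_onD[OF bij_betw_imp_inj_on[OF g] that] .
  show ?thesis
    unfolding latin_square_def
  proof (intro conjI ballI inj_onI)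
    fix a b assume "a \<in> X" "b \<in> X"
    then show "?h (Q (g a) (g b)) \<in> X"
      using bij_betw_apply[OF bij_betw_the_inv_into[OF g] QS] by blast
  next
    fix a b c assume abc: "a \<in> X" "b \<in> X" "c \<in> X" and "?h (Q (g a) (g b)) = ?h (Q (g a) (g c))"
    then have "Q (g a) (g b) = Q (g a) (g c)" using h_eq QS by blast
    then show "b = c" using latin_square_cancel_left[OF Q] gX g_eq abc by blast
  next
    fix a b c assume abc: "a \<in> X" "b \<in> X" "c \<in> X" and "?h (Q (g b) (g a)) = ?h (Q (g c) (g a))"
    then have "Q (g b) (g a) = Q (g c) (g a)" using h_eq QS by blast
    then show "b = c" using latin_square_cancel_right[OF Q] gX g_eq abc by blast
  qed
qed

lemma orthogonal_latin_squares_transfer: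
  assumes QR: "orthogonal_latin_squares S Q R" and g: "bij_betw g X S"
  shows "orthogonal_latin_squares X
           (\<lambda>a b. the_inv_into X g (Q (g a) (g b))) (\<lambda>a b. the_inv_into X g (R (g a) (g b)))"
proof -
  let ?h = "the_inv_into X g"
  note Q = orthogonal_latin_squares_latin(1)[OF QR] and R = orthogonal_latin_squares_latin(2)[OF QR]
  have gX: "g a \<in> S" if "a \<in> X" for a using bij_betw_apply[OF g that] .
  have h_eq: "u = v" if "?h u = ?h v" "u \<in> S" "v \<in> S" for u v
    using inj_onD[OF bij_betw_imp_inj_on[OF bij_betw_the_inv_into[OF g]] that] .
  have g_eq: "a = b" if "g a = g b" "a \<in> X" "b \<in> X" for a b
    using inj_onD[OF bij_betw_imp_inj_on[OF g] that] .
  have "inj_on (\<lambda>(a, b). (?h (Q (g a) (g b)), ?h (R (g a) (g b)))) (X \<times> X)"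
  proof (rule inj_onI)
    fix p q assume "p \<in> X \<times> X" "q \<in> X \<times> X"
      and eq: "(\<lambda>(a, b). (?h (Q (g a) (g b)), ?h (R (g a) (g b)))) p
             = (\<lambda>(a, b). (?h (Q (g a) (g b)), ?h (R (g a) (g b)))) q"
    then obtain a b c d where p: "p = (a, b)" and q: "q = (c, d)"
      and abcd: "a \<in> X" "b \<in> X" "c \<in> X" "d \<in> X" by blast
    have "?h (Q (g a) (g b)) = ?h (Q (g c) (g d))" "?h (R (g a) (g b)) = ?h (R (g c) (g d))"
      using eq unfolding p q by simp_all
    then have "Q (g a) (g b) = Q (g c) (g d)" "R (g a) (g b) = R (g c) (g d)"
      using h_eq latin_square_closed[OF Q] latin_square_closed[OF R] gX abcd by metis+
    then show "p = q"
      using orthogonal_latin_squares_cancel[OF QR] gX g_eq abcd unfolding p q by blast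
  qed
  then show ?thesis
    unfolding orthogonal_latin_squares_def
    using latin_square_transfer[OF Q g] latin_square_transfer[OF R g] by blast
qed

(* The last hypothesis says that b \<mapsto> \<theta> b \<otimes> inv b is injective: \<theta> is an orthomorphism. *)
lemma (in comm_group) orthogonal_latin_squares_orthomorphism:
  assumes \<theta>: "\<theta> \<in> carrier G \<rightarrow> carrier G" "inj_on \<theta> (carrier G)"
    and orth: "\<And>b d. b \<in> carrier G \<Longrightarrow> d \<in> carrier G \<Longrightarrow> \<theta> b \<otimes> d = \<theta> d \<otimes> b \<Longrightarrow> b = d"
  shows "orthogonal_latin_squares (carrier G) (\<lambda>a b. a \<otimes> b) (\<lambda>a b. a \<otimes> \<theta> b)"
proof -
  have \<theta>G: "\<theta> b \<in> carrier G" if "b \<in> carrier G" for b using \<theta>(1) that by blast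
  have "latin_square (carrier G) (\<lambda>a b. a \<otimes> b)"
    unfolding latin_square_def by (auto intro!: inj_onI)
  moreover have "latin_square (carrier G) (\<lambda>a b. a \<otimes> \<theta> b)"
    unfolding latin_square_def using \<theta>G inj_onD[OF \<theta>(2)] by (auto intro!: inj_onI)
  moreover have "inj_on (\<lambda>(a, b). (a \<otimes> b, a \<otimes> \<theta> b)) (carrier G \<times> carrier G)"
  proof (rule inj_onI, clarify)
    fix a b c d assume G: "a \<in> carrier G" "b \<in> carrier G" "c \<in> carrier G" "d \<in> carrier G"
      and Q: "a \<otimes> b = c \<otimes> d" and R: "a \<otimes> \<theta> b = c \<otimes> \<theta> d"
    have "(a \<otimes> c) \<otimes> (\<theta> b \<otimes> d) = (a \<otimes> \<theta> b) \<otimes> (c \<otimes> d)"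
      using G \<theta>G by (simp add: m_ac)
    also have "\<dots> = (c \<otimes> \<theta> d) \<otimes> (a \<otimes> b)" using G \<theta>G by (simp add: Q R m_comm)
    also have "\<dots> = (a \<otimes> c) \<otimes> (\<theta> d \<otimes> b)" using G \<theta>G by (simp add: m_ac)
    finally have "\<theta> b \<otimes> d = \<theta> d \<otimes> b" using G \<theta>G by simp
    then have "b = d" using G orth by blast
    then show "a = c \<and> b = d" using Q G by simp
  qed
  ultimately show ?thesis unfolding orthogonal_latin_squares_def by blast
qed

lemma comm_group_DirProd:
  assumes "comm_group G" "comm_group H"
  shows "comm_group (G \<times>\<times> H)"
proof -
  interpret G: comm_group G by fact
  interpret H: comm_group H by fact
  show ?thesis
    by (rule group.group_comm_groupI[OF DirProd_group[OF G.is_group H.is_group]])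
      (auto simp: G.m_comm H.m_comm)
qed

lemma mod_eq_bounded_diff:
  fixes m x y :: int
  assumes "0 < m" "x mod m = y mod m" "\<bar>x - y\<bar> \<le> m"
  shows "x - y \<in> {-m, 0, m}"
proof -
  obtain q where q: "x - y = m * q"
    using assms(2) by (metis mod_eq_dvd_iff dvd_def)
  have "m * \<bar>q\<bar> \<le> m * 1"
    using assms(1,3) q by (simp add: abs_mult)
  then have "q \<in> {-1, 0, 1}" using assms(1) by auto
  then show ?thesis using q by auto
qed

lemma orthogonal_latin_squares_odd_order:
  assumes "odd n"
  shows "orthogonal_latin_squares {0..<int n} (\<lambda>a b. (a + b) mod int n) (\<lambda>a b. (a + 2 * b) mod int n)"
proof -
  let ?Z = "integer_mod_group n"
  have n: "0 < int n" using assms by (simp add: odd_pos)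
  have coprime: "coprime (int n) 2" using assms by simp
  have Z: "carrier ?Z = {0..<int n}" using n by (simp add: carrier_integer_mod_group)
  have "orthogonal_latin_squares (carrier ?Z) (\<lambda>a b. a \<otimes>\<^bsub>?Z\<^esub> b) (\<lambda>a b. a \<otimes>\<^bsub>?Z\<^esub> (2 * b mod int n))"
  proof (rule comm_group.orthogonal_latin_squares_orthomorphism)
    show "(\<lambda>b. 2 * b mod int n) \<in> carrier ?Z \<rightarrow> carrier ?Z" using n Z by auto
  next
    show "inj_on (\<lambda>b. 2 * b mod int n) (carrier ?Z)"
    proof (rule inj_onI)
      fix b d assume b: "b \<in> carrier ?Z" and d: "d \<in> carrier ?Z"
        and "2 * b mod int n = 2 * d mod int n"
      then have "int n dvd 2 * (b - d)" by (simp only: mod_eq_dvd_iff right_diff_distrib)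
      then have "b mod int n = d mod int n"
        using coprime_dvd_mult_right_iff[OF coprime] by (simp only: mod_eq_dvd_iff)
      then show "b = d" using b d Z by simp
    qed
  next
    fix b d assume b: "b \<in> carrier ?Z" and d: "d \<in> carrier ?Z"
      and "2 * b mod int n \<otimes>\<^bsub>?Z\<^esub> d = 2 * d mod int n \<otimes>\<^bsub>?Z\<^esub> b"
    then have "(2 * b + d) mod int n = (2 * d + b) mod int n" by (simp add: mod_add_left_eq)
    then have "int n dvd (2 * b + d) - (2 * d + b)" by (simp only: mod_eq_dvd_iff)
    then have "b mod int n = d mod int n" by (simp add: mod_eq_dvd_iff)
    then show "b = d" using b d Z by simp
  qed simp
  then show ?thesis using Z by (simp add: mod_add_right_eq)
qed

definition z2_z2k_orthomorphism :: "int \<Rightarrow> int \<times> int \<Rightarrow> int \<times> int" where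
  "z2_z2k_orthomorphism k b = ((fst b + snd b) mod 2, (snd b div 2 + fst b * k) mod (2 * k))"

lemma z2_z2k_orthomorphism_inj:
  fixes k :: int
  assumes "0 < k"
  shows "inj_on (z2_z2k_orthomorphism k) ({0..<2} \<times> {0..<2 * k})"
proof (rule inj_onI, clarify)
  fix b1 b2 d1 d2 :: int
  assume range: "b1 \<in> {0..<2}" "b2 \<in> {0..<2 * k}" "d1 \<in> {0..<2}" "d2 \<in> {0..<2 * k}"
    and eq: "z2_z2k_orthomorphism k (b1, b2) = z2_z2k_orthomorphism k (d1, d2)"
  have b1d1: "b1 \<in> {0, 1}" "d1 \<in> {0, 1}" using range by auto
  have half: "b2 div 2 \<in> {0..<k}" "d2 div 2 \<in> {0..<k}" using range by auto
  then have "b2 div 2 + b1 * k \<in> {0..<2 * k}" "d2 div 2 + d1 * k \<in> {0..<2 * k}"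
    using b1d1 by auto
  then have sum: "b2 div 2 + b1 * k = d2 div 2 + d1 * k"
    and parity: "(b1 + b2) mod 2 = (d1 + d2) mod 2"
    using eq by (simp_all add: z2_z2k_orthomorphism_def)
  have "b1 = d1" using sum b1d1 half by auto
  moreover have "b2 div 2 = d2 div 2" using sum \<open>b1 = d1\<close> by simp
  moreover have "b2 mod 2 = d2 mod 2" using parity \<open>b1 = d1\<close> by presburger
  ultimately show "b1 = d1 \<and> b2 = d2" by presburger
qed

lemma z2_z2k_orthomorphism_diff_inj:
  fixes k :: int
  assumes "0 < k" and range: "b1 \<in> {0..<2}" "b2 \<in> {0..<2 * k}" "d1 \<in> {0..<2}" "d2 \<in> {0..<2 * k}"
    and eq1: "(fst (z2_z2k_orthomorphism k (b1, b2)) + d1) mod 2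
              = (fst (z2_z2k_orthomorphism k (d1, d2)) + b1) mod 2"
    and eq2: "(snd (z2_z2k_orthomorphism k (b1, b2)) + d2) mod (2 * k)
              = (snd (z2_z2k_orthomorphism k (d1, d2)) + b2) mod (2 * k)"
  shows "b1 = d1 \<and> b2 = d2"
proof -
  have b1d1: "b1 \<in> {0, 1}" "d1 \<in> {0, 1}" using range by auto
  then have k: "b1 * k \<in> {0, k}" "d1 * k \<in> {0, k}" by auto
  have parity: "b2 mod 2 = d2 mod 2"
    using eq1 by (simp add: z2_z2k_orthomorphism_def mod_add_left_eq) presburger
  \<comment> \<open>\<open>b2 - b2 div 2\<close> is \<open>\<lceil>b2/2\<rceil>\<close>, which ranges over \<open>[0, k]\<close>; its extreme values are taken
    only at \<open>b2 = 0\<close> and \<open>b2 = 2k - 1\<close>, which have different parity.\<close>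
  define cb cd where "cb = b2 - b2 div 2" and "cd = d2 - d2 div 2"
  have c: "0 \<le> cb" "cb \<le> k" "0 \<le> cd" "cd \<le> k"
    "cb = 0 \<Longrightarrow> b2 = 0" "cb = k \<Longrightarrow> b2 = 2 * k - 1" "cd = 0 \<Longrightarrow> d2 = 0" "cd = k \<Longrightarrow> d2 = 2 * k - 1"
    using range unfolding cb_def cd_def by auto
  have "(b2 div 2 + b1 * k + d2) - (d2 div 2 + d1 * k + b2) \<in> {-(2 * k), 0, 2 * k}"
    using eq2 range k assms(1)
    by (intro mod_eq_bounded_diff) (auto simp: z2_z2k_orthomorphism_def mod_add_left_eq)
  then have diff: "cd - cb + (b1 * k - d1 * k) \<in> {-(2 * k), 0, 2 * k}"
    unfolding cb_def cd_def by (simp add: algebra_simps)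
  show ?thesis
  proof (cases "b1 = d1")
    case True
    then have "cb = cd" using diff c assms(1) by auto
    then show ?thesis using True parity unfolding cb_def cd_def by presburger
  next
    case False
    then have "b1 * k - d1 * k \<in> {-k, k}" using b1d1 by auto
    then have "b2 \<in> {0, 2 * k - 1} \<and> d2 \<in> {0, 2 * k - 1} \<and> b2 \<noteq> d2"
      using diff c assms(1) by auto
    then show ?thesis using parity by auto
  qed
qed

lemma orthogonal_latin_squares_order_4k:
  assumes "0 < k"
  shows "\<exists>Q R. orthogonal_latin_squares ({0..<2::int} \<times> {0..<2 * int k}) Q R"
proof -
  let ?G = "integer_mod_group 2 \<times>\<times> integer_mod_group (2 * k)"
  let ?\<theta> = "z2_z2k_orthomorphism (int k)"
  have G: "carrier ?G = {0..<2::int} \<times> {0..<2 * int k}"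
    using assms by (simp add: carrier_integer_mod_group)
  have "orthogonal_latin_squares (carrier ?G) (\<lambda>a b. a \<otimes>\<^bsub>?G\<^esub> b) (\<lambda>a b. a \<otimes>\<^bsub>?G\<^esub> ?\<theta> b)"
  proof (rule comm_group.orthogonal_latin_squares_orthomorphism)
    show "comm_group ?G" by (simp add: comm_group_DirProd)
    show "?\<theta> \<in> carrier ?G \<rightarrow> carrier ?G"
      using assms unfolding G by (auto simp: z2_z2k_orthomorphism_def)
    show "inj_on ?\<theta> (carrier ?G)"
      unfolding G using z2_z2k_orthomorphism_inj assms by simp
  next
    fix b d assume "b \<in> carrier ?G" "d \<in> carrier ?G" and "?\<theta> b \<otimes>\<^bsub>?G\<^esub> d = ?\<theta> d \<otimes>\<^bsub>?G\<^esub> b"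
    then show "b = d"
      using z2_z2k_orthomorphism_diff_inj[of "int k" "fst b" "snd b" "fst d" "snd d"] assms
      unfolding G by (auto simp: mult_DirProd')
  qed
  then show ?thesis unfolding G by blast
qed

lemma orthogonal_latin_squares_empty: "orthogonal_latin_squares {} Q R"
  by (simp add: orthogonal_latin_squares_def latin_square_def)

lemma orthogonal_latin_squares_exist:
  assumes "finite X" and "card X mod 4 \<noteq> 2"
  shows "\<exists>Q R. orthogonal_latin_squares X Q R"
proof -
  have transfer: "\<exists>Q R. orthogonal_latin_squares X Q R"
    if "orthogonal_latin_squares S Q R" "finite S" "card S = card X" for S :: "'b set" and Q R
    using orthogonal_latin_squares_transfer[OF that(1)] finite_same_card_bij[OF assms(1) that(2)] that(3)
    by metis
  show ?thesis
  proof (cases "odd (card X)")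
    case True
    then show ?thesis using transfer[OF orthogonal_latin_squares_odd_order] by simp
  next
    case False
    define k where "k = card X div 4"
    have k: "card X = 4 * k" using False assms(2) unfolding k_def by presburger
    show ?thesis
    proof (cases "k = 0")
      case True
      then have "X = {}" using k assms(1) by simp
      then show ?thesis using orthogonal_latin_squares_empty by blast
    next
      case False
      then obtain Q R where QR: "orthogonal_latin_squares ({0..<2::int} \<times> {0..<2 * int k}) Q R"
        using orthogonal_latin_squares_order_4k by blast
      have "card ({0..<2::int} \<times> {0..<2 * int k}) = card X"
        using k by (simp add: card_cartesian_product nat_mult_distrib)
      then show ?thesis using transfer[OF QR] by simp
    qed
  qed
qed

lemma words_ext: "z \<in> words s X \<Longrightarrow> z' \<in> words s X \<Longrightarrow> (\<And>l. l < s \<Longrightarrow> z l = z' l) \<Longrightarrow> z = z'"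
  unfolding words_def by (rule PiE_ext) auto

lemma finite_words: "finite X \<Longrightarrow> finite (words s X)"
  by (simp add: words_def finite_PiE)

lemma card_words: "finite X \<Longrightarrow> card (words s X) = card X ^ s"
  by (simp add: words_def card_PiE)

lemma is_AONT_1_the_inv_into:
  assumes fin: "finite X" and s: "1 \<le> s"
    and P: "bij_betw P (words s X) (words s X)"
    and single: "\<And>z z' i j. z \<in> words s X \<Longrightarrow> z' \<in> words s X \<Longrightarrow> i < s \<Longrightarrow> j < s \<Longrightarrow>
                   (\<forall>l<s. l \<noteq> j \<longrightarrow> z l = z' l) \<Longrightarrow> P z i = P z' i \<Longrightarrow> z j = z' j"
  shows "is_AONT 1 s X (the_inv_into (words s X) P)"
proof -
  let ?W = "words s X"
  define \<phi> where "\<phi> = the_inv_into ?W P"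
  have \<phi>: "bij_betw \<phi> ?W ?W" unfolding \<phi>_def by (rule bij_betw_the_inv_into[OF P])
  have P_\<phi>: "P (\<phi> x) = x" if "x \<in> ?W" for x
    unfolding \<phi>_def using f_the_inv_into_f_bij_betw[OF P that] .
  have "bij_betw (\<lambda>x. (restrict x I, restrict (\<phi> x) J)) ?W (PiE I (\<lambda>_. X) \<times> PiE J (\<lambda>_. X))"
    if I: "I \<subseteq> {..<s}" "card I = 1" and J: "J \<subseteq> {..<s}" "card J = s - 1" for I J
  proof -
    let ?F = "\<lambda>x. (restrict x I, restrict (\<phi> x) J)"
    let ?T = "PiE I (\<lambda>_. X) \<times> PiE J (\<lambda>_. X)"
    obtain i where i: "I = {i}" using I(2) by (rule card_1_singletonE)
    have "card ({..<s} - J) = 1" using J s by (simp add: card_Diff_subset finite_subset)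
    then obtain j where j: "{..<s} - J = {j}" by (rule card_1_singletonE)
    have inj: "inj_on ?F ?W"
    proof (rule inj_onI)
      fix x x' assume x: "x \<in> ?W" and x': "x' \<in> ?W" and eq: "?F x = ?F x'"
      have \<phi>x: "\<phi> x \<in> ?W" "\<phi> x' \<in> ?W" using bij_betw_apply[OF \<phi>] x x' by blast+
      have "P (\<phi> x) i = P (\<phi> x') i"
        using fun_cong[OF arg_cong[OF eq, of fst], of i] i unfolding P_\<phi>[OF x] P_\<phi>[OF x'] by simp
      moreover have agree: "\<phi> x l = \<phi> x' l" if "l < s" "l \<noteq> j" for l
      proof -
        have "l \<in> J" using that j by blast
        then show ?thesis using fun_cong[OF arg_cong[OF eq, of snd], of l] by simp
      qed
      ultimately have "\<phi> x j = \<phi> x' j"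
        using single[OF \<phi>x] i j I(1) by blast
      then have "\<phi> x = \<phi> x'"
        using words_ext[OF \<phi>x] agree by metis
      then show "x = x'" using P_\<phi>[OF x] P_\<phi>[OF x'] by metis
    qed
    moreover have "?F ` ?W \<subseteq> ?T"
      using bij_betw_apply[OF \<phi>] I(1) J(1) unfolding words_def by (fastforce simp: PiE_iff)
    moreover have "card (?F ` ?W) = card ?T"
      using card_image[OF inj] I J fin s
      by (simp add: card_words card_cartesian_product card_PiE finite_subset flip: power_Suc)
    ultimately show ?thesis
      unfolding bij_betw_def using card_subset_eq[of ?T] fin I J by (simp add: finite_PiE finite_subset)
  qed
  then show ?thesis
    unfolding is_AONT_def \<phi>_def[symmetric] using s \<phi> by auto
qed

fun ols_cascade :: "('a \<Rightarrow> 'a \<Rightarrow> 'a) \<Rightarrow> ('a \<Rightarrow> 'a \<Rightarrow> 'a) \<Rightarrow> nat \<Rightarrow> (nat \<Rightarrow> 'a) \<Rightarrow> nat \<Rightarrow> 'a" where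
  "ols_cascade Q R 0 x = (\<lambda>_. x 0)"
| "ols_cascade Q R (Suc k) x =
     (\<lambda>i. if i \<le> k then Q (ols_cascade Q R k x i) (x (Suc k))
          else R (ols_cascade Q R k x k) (x (Suc k)))"

lemma ols_cascade_cong: "(\<And>l. l \<le> k \<Longrightarrow> x l = x' l) \<Longrightarrow> ols_cascade Q R k x = ols_cascade Q R k x'"
  by (induction k) auto

context
  fixes X Q R
  assumes ols: "orthogonal_latin_squares X Q R"
begin

lemma ols_cascade_in: "(\<And>l. l \<le> k \<Longrightarrow> x l \<in> X) \<Longrightarrow> ols_cascade Q R k x i \<in> X"
  using orthogonal_latin_squares_latin[OF ols]
  by (induction k arbitrary: i) (auto intro: latin_square_closed)

lemma ols_cascade_inj:
  assumes "\<And>l. l \<le> k \<Longrightarrow> x l \<in> X" "\<And>l. l \<le> k \<Longrightarrow> x' l \<in> X"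
    and "\<And>i. i \<le> k \<Longrightarrow> ols_cascade Q R k x i = ols_cascade Q R k x' i"
  shows "l \<le> k \<Longrightarrow> x l = x' l"
  using assms
proof (induction k arbitrary: l)
  case 0
  then show ?case using "0.prems"(4)[of 0] by simp
next
  case (Suc k)
  note Q = orthogonal_latin_squares_latin(1)[OF ols]
  let ?y = "ols_cascade Q R k x" and ?y' = "ols_cascade Q R k x'"
  have y: "?y i \<in> X" "?y' i \<in> X" for i using Suc.prems(2,3) by (auto intro: ols_cascade_in)
  have new_X: "x (Suc k) \<in> X" "x' (Suc k) \<in> X" using Suc.prems(2,3) by auto
  have "Q (?y k) (x (Suc k)) = Q (?y' k) (x' (Suc k))" "R (?y k) (x (Suc k)) = R (?y' k) (x' (Suc k))"
    using Suc.prems(4)[of k] Suc.prems(4)[of "Suc k"] by simp_all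
  then have new: "x (Suc k) = x' (Suc k)"
    using orthogonal_latin_squares_cancel[OF ols _ _ y(1) new_X(1) y(2) new_X(2)] by blast
  have y_eq: "?y i = ?y' i" if "i \<le> k" for i
  proof -
    have "Q (?y i) (x (Suc k)) = Q (?y' i) (x (Suc k))"
      using Suc.prems(4)[of i] that new by simp
    then show ?thesis using latin_square_cancel_right[OF Q _ new_X(1) y] by blast
  qed
  have x_X: "x l \<in> X" "x' l \<in> X" if "l \<le> k" for l using Suc.prems(2,3) that by simp_all
  have "x l = x' l" if "l \<le> k" for l
    using Suc.IH[OF that x_X y_eq] .
  then show ?case using new Suc.prems(1) by (cases "l = Suc k") auto
qed

lemma ols_cascade_cancel:
  assumes "\<And>l. l \<le> k \<Longrightarrow> x l \<in> X" "\<And>l. l \<le> k \<Longrightarrow> x' l \<in> X"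
    and "j \<le> k" "\<And>l. l \<le> k \<Longrightarrow> l \<noteq> j \<Longrightarrow> x l = x' l"
    and "ols_cascade Q R k x i = ols_cascade Q R k x' i"
  shows "x j = x' j"
  using assms
proof (induction k arbitrary: i)
  case 0
  then show ?case by simp
next
  case (Suc k)
  note Q = orthogonal_latin_squares_latin(1)[OF ols] and R = orthogonal_latin_squares_latin(2)[OF ols]
  let ?y = "ols_cascade Q R k x" and ?y' = "ols_cascade Q R k x'"
  have y: "?y i \<in> X" "?y' i \<in> X" for i using Suc.prems(1,2) by (auto intro: ols_cascade_in)
  have new_X: "x (Suc k) \<in> X" "x' (Suc k) \<in> X" using Suc.prems(1,2) by auto
  show ?case
  proof (cases "j = Suc k")
    case True
    then have y_eq: "?y = ?y'" using Suc.prems(4) by (intro ols_cascade_cong) auto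
    show ?thesis
    proof (cases "i \<le> k")
      case True
      then have "Q (?y i) (x (Suc k)) = Q (?y i) (x' (Suc k))" using Suc.prems(5) y_eq by simp
      then show ?thesis using latin_square_cancel_left[OF Q _ y(1) new_X] \<open>j = Suc k\<close> by simp
    next
      case False
      then have "R (?y k) (x (Suc k)) = R (?y k) (x' (Suc k))" using Suc.prems(5) y_eq by simp
      then show ?thesis using latin_square_cancel_left[OF R _ y(1) new_X] \<open>j = Suc k\<close> by simp
    qed
  next
    case False
    then have new: "x (Suc k) = x' (Suc k)" using Suc.prems(4) by simp
    have "?y (min i k) = ?y' (min i k)"
    proof (cases "i \<le> k")
      case True
      then have "Q (?y i) (x (Suc k)) = Q (?y' i) (x (Suc k))" using Suc.prems(5) new by simp
      then show ?thesis using latin_square_cancel_right[OF Q _ new_X(1) y] True by simp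
    next
      case False
      then have "R (?y k) (x (Suc k)) = R (?y' k) (x (Suc k))" using Suc.prems(5) new by simp
      then show ?thesis using latin_square_cancel_right[OF R _ new_X(1) y] False by simp
    qed
    moreover have "j \<le> k" using Suc.prems(3) False by simp
    moreover have "x l \<in> X" "x' l \<in> X" if "l \<le> k" for l using Suc.prems(1,2) that by simp_all
    moreover have "x l = x' l" if "l \<le> k" "l \<noteq> j" for l using Suc.prems(4) that by simp
    ultimately show ?thesis using Suc.IH by blast
  qed
qed

end

lemma AONT_1_from_orthogonal_latin_squares:
  assumes ols: "orthogonal_latin_squares X Q R" and fin: "finite X" and s: "1 \<le> s"
  shows "\<exists>\<phi>. is_AONT 1 s X \<phi>"
proof -
  let ?W = "words s X"
  define P where "P z = restrict (ols_cascade Q R (s - 1) z) {..<s}" for z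
  have in_X: "\<And>l. l \<le> s - 1 \<Longrightarrow> z l \<in> X" if "z \<in> ?W" for z
    using that s unfolding words_def by (simp add: PiE_iff)
  have "P z \<in> ?W" if "z \<in> ?W" for z
    unfolding P_def words_def restrict_PiE_iff
    using ols_cascade_in[OF ols, where k = "s - 1" and x = z, OF in_X[OF that]] by blast
  then have "P ` ?W \<subseteq> ?W" by blast
  moreover have "inj_on P ?W"
  proof (rule inj_onI)
    fix z z' assume z: "z \<in> ?W" and z': "z' \<in> ?W" and eq: "P z = P z'"
    have "ols_cascade Q R (s - 1) z i = ols_cascade Q R (s - 1) z' i" if "i \<le> s - 1" for i
    proof -
      have "i < s" using that s by linarith
      then show ?thesis using fun_cong[OF eq, of i] unfolding P_def by simp
    qed
    then have "z l = z' l" if "l < s" for l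
      using ols_cascade_inj[OF ols, where k = "s - 1" and x = z and x' = z', OF in_X[OF z] in_X[OF z']]
        that by simp
    then show "z = z'" using words_ext[OF z z'] by blast
  qed
  ultimately have "bij_betw P ?W ?W"
    unfolding bij_betw_def using endo_inj_surj[OF finite_words[OF fin]] by blast
  then have "is_AONT 1 s X (the_inv_into ?W P)"
  proof (rule is_AONT_1_the_inv_into[OF fin s])
    fix z z' i j assume z: "z \<in> ?W" and z': "z' \<in> ?W" and "i < s" "j < s"
      and agree: "\<forall>l<s. l \<noteq> j \<longrightarrow> z l = z' l" and "P z i = P z' i"
    then have "ols_cascade Q R (s - 1) z i = ols_cascade Q R (s - 1) z' i" unfolding P_def by simp
    moreover have "z l = z' l" if "l \<le> s - 1" "l \<noteq> j" for l using agree that s by simp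
    ultimately show "z j = z' j"
      using ols_cascade_cancel[OF ols, where k = "s - 1" and x = z and x' = z', OF in_X[OF z] in_X[OF z']]
        \<open>j < s\<close> by simp
  qed
  then show ?thesis by blast
qed

theorem corollary3p4:
  fixes n s :: nat and X :: "'a set"
  assumes "n \<ge> 3" and "n mod 4 \<noteq> 2" and "s \<ge> 1"
    and "finite X" and "card X = n"
  shows "\<exists>\<phi>. is_AONT 1 s X \<phi>"
proof -
  obtain Q R where "orthogonal_latin_squares X Q R"
    using orthogonal_latin_squares_exist[OF assms(4)] assms(2,5) by blast
  then show ?thesis using AONT_1_from_orthogonal_latin_squares assms(3,4) by blast
qed

end
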